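(* Let the data graph $d$ be modeled as a power-law random (PR) graph, in which a vertex has degree $w$ with probability $\mathrm{p}_w$ and, given degrees $w_i$ and $w_j$ of two vertices, an edge between them exists with probability $w_i w_j \rho$. Let $p$ be a pattern graph with vertex set $V(p)=\{v_1,\dots,v_k\}$, and let $\mathbf{ord}$ be a partial order on $V(p)$ used for symmetry breaking. Consider a uniformly random injective assignment $f:V(p)\to V(d)$, and call $f$ valid if (MC$_1$) for every mapping $v\mapsto u$ in $f$, $deg(v)\le deg(u)$, where $deg(v)$ is the degree of $v$ in $p$ and $deg(u)$ the degree of $u$ in $d$, and (MC$_2$) for every edge $(v_i,v_j)\in E(p)$, $(f(v_i),f(v_j))\in E(d)$. Then the probability that $f$ is valid is $$\epsilon=\rho^{|E(p)|}\cdot\prod_{v_i\in V(p)}\sum_{w=deg(v_i)}^{\infty} w^{deg(v_i)}\,\mathrm{p}_w,$$ and the expected number of matches of $p$ in $d$ is $$\mathrm{E}(|M(p,d)|)=\frac{|V(d)|!}{(|V(d)|-|V(p)|)!}\cdot\epsilon\cdot\frac{|Auto(p,\mathbf{ord})|}{|Auto(p,\emptyset)|},$$ where $Auto(p,\mathbf{ord})$ denotes the set of automorphisms of $p$ satisfying $\mathbf{ord}$ and $Auto(p,\emptyset)$ the set of all automorphisms of $p$.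
   Context: Data graph $d$ is modeled as a PR (power-law random) graph with degree distribution $\mathrm{p}_w$ and edge probability $w_i w_j\rho$ between vertices of degrees $w_i,w_j$; $M(p,d)$ is the set of matches (subgraph isomorphisms respecting the symmetry-breaking partial order $\mathbf{ord}$) of pattern $p$ in $d$. *)

theory Defs
  imports "HOL-Probability.Probability"
begin

text \<open>Vertices of the pattern p are 0..<k (standing for v_1..v_k); its edges are
  a set Ep of 2-element vertex sets. Vertices of the data graph d are 0..<n.\<close>

definition doubletons :: "nat \<Rightarrow> nat set set" where
  "doubletons m = {e. \<exists>a b. a \<noteq> b \<and> a < m \<and> b < m \<and> e = {a, b}}"

definition simple_graph :: "nat \<Rightarrow> nat set set \<Rightarrow> bool" where
  "simple_graph k Ep \<longleftrightarrow> Ep \<subseteq> doubletons k"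

definition pdeg :: "nat set set \<Rightarrow> nat \<Rightarrow> nat" where
  "pdeg Ep v = card {e \<in> Ep. v \<in> e}"

definition strict_po_on :: "nat \<Rightarrow> (nat \<times> nat) set \<Rightarrow> bool" where
  "strict_po_on k ord \<longleftrightarrow> ord \<subseteq> {0..<k} \<times> {0..<k} \<and> irrefl ord \<and> trans ord"

definition sat_ord :: "(nat \<times> nat) set \<Rightarrow> (nat \<Rightarrow> nat) \<Rightarrow> bool" where
  "sat_ord ord g \<longleftrightarrow> (\<forall>(a, b) \<in> ord. g a < g b)"

definition Auto :: "nat \<Rightarrow> nat set set \<Rightarrow> (nat \<Rightarrow> nat) set" where
  "Auto k Ep = {\<sigma> \<in> {0..<k} \<rightarrow>\<^sub>E {0..<k}. bij_betw \<sigma> {0..<k} {0..<k} \<and>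
      (\<forall>a<k. \<forall>b<k. {a, b} \<in> Ep \<longleftrightarrow> {\<sigma> a, \<sigma> b} \<in> Ep)}"

text \<open>Automorphisms satisfying ord: Auto(p, ord).  Auto(p, {}) = Auto k Ep.\<close>
definition Auto_ord :: "nat \<Rightarrow> nat set set \<Rightarrow> (nat \<times> nat) set \<Rightarrow> (nat \<Rightarrow> nat) set" where
  "Auto_ord k Ep ord = {\<sigma> \<in> Auto k Ep. sat_ord ord \<sigma>}"

text \<open>ord is used for symmetry breaking: in every automorphism orbit {g o s | s in Aut}
  of an injective labelling g of the pattern vertices, the number of members
  satisfying ord is the same (namely |Auto(p,ord)|).  This covers ord = {} and
  the usual "exactly one representative per orbit" symmetry-breaking orders.\<close>
definition symmetry_breaking :: "nat \<Rightarrow> nat set set \<Rightarrow> (nat \<times> nat) set \<Rightarrow> bool" where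
  "symmetry_breaking k Ep ord \<longleftrightarrow> strict_po_on k ord \<and>
     (\<forall>g. inj_on g {0..<k} \<longrightarrow>
        card {\<sigma> \<in> Auto k Ep. sat_ord ord (g \<circ> \<sigma>)} = card (Auto_ord k Ep ord))"

text \<open>A data graph is a pair (W, B) with B the edge indicator.\<close>
definition PR_graph :: "nat \<Rightarrow> nat pmf \<Rightarrow> real \<Rightarrow> ((nat \<Rightarrow> nat) \<times> (nat set \<Rightarrow> bool)) pmf" where
  "PR_graph n P \<rho> =
     do { W \<leftarrow> Pi_pmf {0..<n} 0 (\<lambda>_. P);
          B \<leftarrow> Pi_pmf (doubletons n) False (\<lambda>e. bernoulli_pmf (\<rho> * (\<Prod>u\<in>e. real (W u))));
          return_pmf (W, B) }"

definition assignments :: "nat \<Rightarrow> nat \<Rightarrow> (nat \<Rightarrow> nat) set" where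
  "assignments k n = {f \<in> {0..<k} \<rightarrow>\<^sub>E {0..<n}. inj_on f {0..<k}}"

text \<open>Validity: MC1 (deg_p v \<le> deg_d (f v), where the degree of a data vertex is its
  PR-model degree W) and MC2 (edges are preserved).\<close>
definition valid :: "nat \<Rightarrow> nat set set \<Rightarrow> (nat \<Rightarrow> nat) \<Rightarrow> (nat \<Rightarrow> nat) \<Rightarrow> (nat set \<Rightarrow> bool) \<Rightarrow> bool" where
  "valid k Ep f W B \<longleftrightarrow> (\<forall>v<k. pdeg Ep v \<le> W (f v)) \<and> (\<forall>e\<in>Ep. B (f ` e))"

definition matches :: "nat \<Rightarrow> nat \<Rightarrow> nat set set \<Rightarrow> (nat \<times> nat) set \<Rightarrow> (nat \<Rightarrow> nat) \<Rightarrow> (nat set \<Rightarrow> bool) \<Rightarrow> (nat \<Rightarrow> nat) set" where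
  "matches k n Ep ord W B = {f \<in> assignments k n. valid k Ep f W B \<and> sat_ord ord f}"

end

theory Submission
  imports Defs
begin

text \<open>Fix an injective labelling \<open>f\<close> of the pattern vertices. Given the weights \<open>W\<close>, the
  edges are independent, and every pattern vertex \<open>v\<close> lies on \<open>deg(v)\<close> pattern edges, so \<open>f\<close> is
  valid with probability \<open>\<rho>^|E(p)| \<Prod>\<^sub>v W(f v)^deg(v) [deg(v) \<le> W(f v)]\<close>. Since \<open>f\<close> is
  injective, the weights \<open>W(f v)\<close> are independent with law \<open>p\<^sub>w\<close>, and averaging gives \<open>\<epsilon>\<close> for
  every \<open>f\<close>, hence also for a uniformly random one. By linearity of expectation, \<open>E|M(p,d)|\<close> is
  \<open>\<epsilon>\<close> times the number of labellings satisfying \<open>ord\<close>. Counting the pairs \<open>(g, \<sigma>)\<close> of a labelling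
  and an automorphism with \<open>g \<circ> \<sigma>\<close> satisfying \<open>ord\<close> in two ways (precomposition with \<open>\<sigma>\<close>
  permutes the labellings; every orbit contains \<open>|Auto(p,ord)|\<close> good members by symmetry breaking)
  shows that this number is the fraction \<open>|Auto(p,ord)|/|Auto(p,\<emptyset>)|\<close> of all labellings.\<close>

section \<open>Labellings and automorphisms\<close>

lemma finite_assignments: "finite (assignments k n)"
  by (rule finite_subset[of _ "{0..<k} \<rightarrow>\<^sub>E {0..<n}"]) (auto simp: assignments_def intro: finite_PiE)

lemma falling_factorial_eq_fact_div_fact:
  "k \<le> n \<Longrightarrow> real (\<Prod>i<k. n - i) = fact n / fact (n - k)"
proof (induction k)
  case (Suc k)
  have "n - k = Suc (n - Suc k)"
    using Suc.prems by simp
  then have "fact (n - k) = real (n - k) * fact (n - Suc k)"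
    by (metis fact_Suc of_nat_Suc)
  with Suc show ?case by (simp add: field_simps)
qed simp

lemma card_assignments:
  assumes "k \<le> n"
  shows "real (card (assignments k n)) = fact n / fact (n - k)"
  using card_inj_on_subset_funcset[of "{0..<k}" "{0..<n}" "{0..<k}"]
    falling_factorial_eq_fact_div_fact[OF assms]
  by (simp add: assignments_def atLeast0LessThan)

lemma finite_Auto: "finite (Auto k Ep)"
  by (rule finite_subset[of _ "{0..<k} \<rightarrow>\<^sub>E {0..<k}"]) (auto simp: Auto_def intro: finite_PiE)

lemma Auto_nonempty: "Auto k Ep \<noteq> {}"
proof -
  have "restrict id {0..<k} \<in> Auto k Ep"
    by (auto simp: Auto_def bij_betw_def inj_on_def)
  then show ?thesis by blast
qed

lemma restrict_precompose_mem:
  assumes "bij_betw \<pi> K K" "g \<in> {g \<in> K \<rightarrow>\<^sub>E B. inj_on g K}"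
  shows "restrict (g \<circ> \<pi>) K \<in> {g \<in> K \<rightarrow>\<^sub>E B. inj_on g K}"
proof -
  have \<pi>K: "\<pi> ` K = K" using assms(1) by (simp add: bij_betw_def)
  have g: "g \<in> K \<rightarrow>\<^sub>E B" "inj_on g K" using assms(2) by simp_all
  have "restrict (g \<circ> \<pi>) K \<in> K \<rightarrow>\<^sub>E B"
    using \<pi>K by (auto simp: restrict_PiE_iff intro!: PiE_mem[OF g(1)])
  moreover have "inj_on (restrict (g \<circ> \<pi>) K) K"
    using \<pi>K assms(1) g(2) by (simp add: bij_betw_def comp_inj_on)
  ultimately show ?thesis by simp
qed

lemma restrict_precompose_inverse:
  assumes "bij_betw \<pi> K K" "\<And>x. x \<in> K \<Longrightarrow> \<pi>' (\<pi> x) = x" "g \<in> K \<rightarrow>\<^sub>E B"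
  shows "restrict (restrict (g \<circ> \<pi>') K \<circ> \<pi>) K = g"
proof (rule ext)
  fix x
  show "restrict (restrict (g \<circ> \<pi>') K \<circ> \<pi>) K x = g x"
  proof (cases "x \<in> K")
    case True
    then have "\<pi> x \<in> K" using assms(1) by (simp add: bij_betwE)
    with True show ?thesis using assms(2) by simp
  next
    case False
    then show ?thesis by (simp add: PiE_arb[OF assms(3)])
  qed
qed

lemma bij_betw_precompose:
  assumes "bij_betw \<sigma> K K"
  shows "bij_betw (\<lambda>g. restrict (g \<circ> \<sigma>) K) {g \<in> K \<rightarrow>\<^sub>E B. inj_on g K} {g \<in> K \<rightarrow>\<^sub>E B. inj_on g K}"
proof -
  define \<tau> where "\<tau> = inv_into K \<sigma>"
  have \<tau>: "bij_betw \<tau> K K" using assms unfolding \<tau>_def by (rule bij_betw_inv_into)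
  have \<sigma>\<tau>: "\<sigma> (\<tau> x) = x" if "x \<in> K" for x
    using assms that unfolding \<tau>_def by (rule bij_betw_inv_into_right)
  have \<tau>\<sigma>: "\<tau> (\<sigma> x) = x" if "x \<in> K" for x
    using assms that unfolding \<tau>_def by (rule bij_betw_inv_into_left)
  show ?thesis
  proof (rule bij_betw_byWitness[where f' = "\<lambda>g. restrict (g \<circ> \<tau>) K"])
    show "\<forall>g\<in>{g \<in> K \<rightarrow>\<^sub>E B. inj_on g K}. restrict (restrict (g \<circ> \<sigma>) K \<circ> \<tau>) K = g"
      using restrict_precompose_inverse[OF \<tau> \<sigma>\<tau>, where B = B] by simp
    show "\<forall>g\<in>{g \<in> K \<rightarrow>\<^sub>E B. inj_on g K}. restrict (restrict (g \<circ> \<tau>) K \<circ> \<sigma>) K = g"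
      using restrict_precompose_inverse[OF assms \<tau>\<sigma>, where B = B] by simp
    show "(\<lambda>g. restrict (g \<circ> \<sigma>) K) ` {g \<in> K \<rightarrow>\<^sub>E B. inj_on g K} \<subseteq> {g \<in> K \<rightarrow>\<^sub>E B. inj_on g K}"
      by (rule image_subsetI) (rule restrict_precompose_mem[OF assms])
    show "(\<lambda>g. restrict (g \<circ> \<tau>) K) ` {g \<in> K \<rightarrow>\<^sub>E B. inj_on g K} \<subseteq> {g \<in> K \<rightarrow>\<^sub>E B. inj_on g K}"
      by (rule image_subsetI) (rule restrict_precompose_mem[OF \<tau>])
  qed
qed

lemma card_filter_bij_betw:
  assumes "bij_betw \<phi> A A"
  shows "card {x \<in> A. Q (\<phi> x)} = card {x \<in> A. Q x}"
proof -
  have image: "\<phi> ` {x \<in> A. Q (\<phi> x)} = {x \<in> A. Q x}"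
    using assms by (auto simp: bij_betw_def)
  have "bij_betw \<phi> {x \<in> A. Q (\<phi> x)} {x \<in> A. Q x}"
    by (rule bij_betw_subset[OF assms _ image]) auto
  then show ?thesis by (rule bij_betw_same_card)
qed

lemma sat_ord_restrict:
  "ord \<subseteq> K \<times> K \<Longrightarrow> sat_ord ord (restrict g K) = sat_ord ord g"
  unfolding sat_ord_def by fastforce

lemma card_sat_ord_precompose_Auto:
  assumes "\<sigma> \<in> Auto k Ep" "ord \<subseteq> {0..<k} \<times> {0..<k}"
  shows "card {g \<in> assignments k n. sat_ord ord (g \<circ> \<sigma>)} = card {g \<in> assignments k n. sat_ord ord g}"
proof -
  have "bij_betw \<sigma> {0..<k} {0..<k}" using assms(1) by (simp add: Auto_def)
  then have "bij_betw (\<lambda>g. restrict (g \<circ> \<sigma>) {0..<k}) (assignments k n) (assignments k n)"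
    unfolding assignments_def by (rule bij_betw_precompose)
  then have "card {g \<in> assignments k n. sat_ord ord (restrict (g \<circ> \<sigma>) {0..<k})}
           = card {g \<in> assignments k n. sat_ord ord g}"
    by (rule card_filter_bij_betw)
  then show ?thesis
    using sat_ord_restrict[OF assms(2)] by simp
qed

lemma card_sat_ord_mult_card_Auto:
  assumes "symmetry_breaking k Ep ord"
  shows "card {f \<in> assignments k n. sat_ord ord f} * card (Auto k Ep)
       = card (assignments k n) * card (Auto_ord k Ep ord)"
proof -
  let ?A = "assignments k n" and ?G = "Auto k Ep"
  have ord: "ord \<subseteq> {0..<k} \<times> {0..<k}"
    using assms by (simp add: symmetry_breaking_def strict_po_on_def)
  have "card ?A * card (Auto_ord k Ep ord) = (\<Sum>g\<in>?A. card {\<sigma> \<in> ?G. sat_ord ord (g \<circ> \<sigma>)})"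
    using assms by (simp add: symmetry_breaking_def assignments_def)
  also have "\<dots> = (\<Sum>g\<in>?A. \<Sum>\<sigma>\<in>?G. if sat_ord ord (g \<circ> \<sigma>) then 1 else 0)"
    using finite_Auto by (simp add: sum.inter_filter[symmetric])
  also have "\<dots> = (\<Sum>\<sigma>\<in>?G. \<Sum>g\<in>?A. if sat_ord ord (g \<circ> \<sigma>) then 1 else 0)"
    by (rule sum.swap)
  also have "\<dots> = (\<Sum>\<sigma>\<in>?G. card {g \<in> ?A. sat_ord ord (g \<circ> \<sigma>)})"
    using finite_assignments by (simp add: sum.inter_filter[symmetric])
  also have "\<dots> = (\<Sum>\<sigma>\<in>?G. card {g \<in> ?A. sat_ord ord g})"
    using card_sat_ord_precompose_Auto[OF _ ord] by simp
  finally show ?thesis by simp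
qed

section \<open>Edges given the weights\<close>

lemma finite_doubletons: "finite (doubletons m)"
  by (rule finite_subset[of _ "Pow {0..<m}"]) (auto simp: doubletons_def)

lemma doubletons_subset: "e \<in> doubletons k \<Longrightarrow> e \<subseteq> {0..<k}"
  by (auto simp: doubletons_def)

lemma image_edge_in_doubletons:
  assumes "e \<in> doubletons k" "f \<in> assignments k n"
  shows "f ` e \<in> doubletons n"
proof -
  obtain a b where ab: "a \<noteq> b" "a < k" "b < k" "e = {a, b}"
    using assms(1) by (auto simp: doubletons_def)
  have f: "inj_on f {0..<k}" "f \<in> {0..<k} \<rightarrow>\<^sub>E {0..<n}"
    using assms(2) by (simp_all add: assignments_def)
  have "f a \<noteq> f b"
    using inj_on_contraD[OF f(1) ab(1)] ab(2,3) by simp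
  moreover have "f a < n" "f b < n"
    using PiE_mem[OF f(2)] ab(2,3) by simp_all
  ultimately show ?thesis
    unfolding doubletons_def ab(4) by blast
qed

lemma prod_edges_eq_prod_pdeg:
  fixes x :: "nat \<Rightarrow> 'a::comm_monoid_mult"
  assumes "Ep \<subseteq> doubletons k"
  shows "(\<Prod>e\<in>Ep. \<Prod>a\<in>e. x a) = (\<Prod>v<k. x v ^ pdeg Ep v)"
proof -
  have fin: "finite Ep" using assms finite_doubletons finite_subset by blast
  have "(\<Prod>e\<in>Ep. \<Prod>a\<in>e. x a) = (\<Prod>e\<in>Ep. \<Prod>a<k. if a \<in> e then x a else 1)"
  proof (rule prod.cong[OF refl])
    fix e assume "e \<in> Ep"
    then have "{a\<in>{..<k}. a \<in> e} = e" using assms by (auto simp: doubletons_def)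
    then show "(\<Prod>a\<in>e. x a) = (\<Prod>a<k. if a \<in> e then x a else 1)"
      by (simp add: prod.inter_filter[symmetric])
  qed
  also have "\<dots> = (\<Prod>a<k. \<Prod>e\<in>Ep. if a \<in> e then x a else 1)"
    by (rule prod.swap)
  also have "\<dots> = (\<Prod>v<k. x v ^ pdeg Ep v)"
    using fin by (simp add: prod.inter_filter[symmetric] pdeg_def)
  finally show ?thesis .
qed

definition PR_edges :: "nat \<Rightarrow> real \<Rightarrow> (nat \<Rightarrow> nat) \<Rightarrow> (nat set \<Rightarrow> bool) pmf" where
  "PR_edges n \<rho> W = Pi_pmf (doubletons n) False (\<lambda>e. bernoulli_pmf (\<rho> * (\<Prod>u\<in>e. real (W u))))"

lemma PR_graph_eq_bind_PR_edges:
  "PR_graph n P \<rho> = Pi_pmf {0..<n} 0 (\<lambda>_. P) \<bind> (\<lambda>W. map_pmf (Pair W) (PR_edges n \<rho> W))"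
  by (simp add: PR_graph_def PR_edges_def map_pmf_def)

lemma prob_Pi_pmf_bernoulli_all:
  assumes "finite D" "F \<subseteq> D" "\<And>d. d \<in> F \<Longrightarrow> 0 \<le> q d" "\<And>d. d \<in> F \<Longrightarrow> q d \<le> 1"
  shows "measure_pmf.prob (Pi_pmf D False (\<lambda>d. bernoulli_pmf (q d))) {B. \<forall>d\<in>F. B d} = (\<Prod>d\<in>F. q d)"
proof -
  have "{B. \<forall>d\<in>F. B d} = Pi D (\<lambda>d. if d \<in> F then {True} else UNIV)"
    using assms(2) by (auto simp: Pi_def)
  then have "measure_pmf.prob (Pi_pmf D False (\<lambda>d. bernoulli_pmf (q d))) {B. \<forall>d\<in>F. B d}
      = (\<Prod>d\<in>D. measure_pmf.prob (bernoulli_pmf (q d)) (if d \<in> F then {True} else UNIV))"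
    using measure_Pi_pmf_Pi[OF assms(1)] by simp
  also have "\<dots> = (\<Prod>d\<in>D. if d \<in> F then q d else 1)"
    using assms(3,4) by (intro prod.cong) (auto simp: measure_pmf_single)
  also have "\<dots> = (\<Prod>d\<in>{d \<in> D. d \<in> F}. q d)"
    using assms(1) by (simp add: prod.inter_filter)
  also have "{d \<in> D. d \<in> F} = F"
    using assms(2) by blast
  finally show ?thesis .
qed

lemma prob_PR_edges_all_present:
  assumes Ep: "Ep \<subseteq> doubletons k" and f: "f \<in> assignments k n" and "\<rho> \<ge> 0"
    and edge_prob_le_1: "\<forall>u<n. \<forall>v<n. \<rho> * real (W u) * real (W v) \<le> 1"
  shows "measure_pmf.prob (PR_edges n \<rho> W) {B. \<forall>e\<in>Ep. B (f ` e)}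
       = \<rho> ^ card Ep * (\<Prod>v<k. real (W (f v)) ^ pdeg Ep v)"
proof -
  define q where "q e = \<rho> * (\<Prod>u\<in>e. real (W u))" for e
  have finj: "inj_on f {0..<k}" using f by (simp add: assignments_def)
  have edges_sub: "e \<subseteq> {0..<k}" if "e \<in> Ep" for e
    using that Ep doubletons_subset by blast
  have F: "(\<lambda>e. f ` e) ` Ep \<subseteq> doubletons n"
    using Ep image_edge_in_doubletons[OF _ f] by blast
  have q_prob: "0 \<le> q d \<and> q d \<le> 1" if "d \<in> doubletons n" for d
    using that \<open>\<rho> \<ge> 0\<close> edge_prob_le_1 by (auto simp: doubletons_def q_def mult.assoc)
  have "{B. \<forall>e\<in>Ep. B (f ` e)} = {B. \<forall>d\<in>(\<lambda>e. f ` e) ` Ep. B d}"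
    by blast
  then have "measure_pmf.prob (PR_edges n \<rho> W) {B. \<forall>e\<in>Ep. B (f ` e)} = (\<Prod>d\<in>(\<lambda>e. f ` e) ` Ep. q d)"
    using prob_Pi_pmf_bernoulli_all[OF finite_doubletons F] q_prob F
    by (simp add: PR_edges_def q_def[abs_def] subset_iff)
  also have "\<dots> = (\<Prod>e\<in>Ep. q (f ` e))"
  proof (rule prod.reindex[unfolded comp_def])
    show "inj_on ((`) f) Ep"
      using inj_on_image_eq_iff[OF finj] edges_sub by (meson inj_onI)
  qed
  also have "\<dots> = (\<Prod>e\<in>Ep. \<rho> * (\<Prod>a\<in>e. real (W (f a))))"
  proof (rule prod.cong[OF refl])
    fix e assume "e \<in> Ep"
    then have "inj_on f e" using finj edges_sub inj_on_subset by blast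
    then show "q (f ` e) = \<rho> * (\<Prod>a\<in>e. real (W (f a)))"
      by (simp add: q_def prod.reindex)
  qed
  also have "\<dots> = \<rho> ^ card Ep * (\<Prod>v<k. real (W (f v)) ^ pdeg Ep v)"
    using prod_edges_eq_prod_pdeg[OF Ep, of "\<lambda>a. real (W (f a))"] by (simp add: prod.distrib)
  finally show ?thesis .
qed

definition truncated_power :: "nat \<Rightarrow> nat \<Rightarrow> real" where
  "truncated_power d w = (if d \<le> w then real w ^ d else 0)"

lemma truncated_power_nonneg: "truncated_power d w \<ge> 0"
  by (simp add: truncated_power_def)

lemma prob_PR_edges_valid:
  assumes "Ep \<subseteq> doubletons k" "f \<in> assignments k n" "\<rho> \<ge> 0"
    and "\<forall>u<n. \<forall>v<n. \<rho> * real (W u) * real (W v) \<le> 1"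
  shows "measure_pmf.prob (PR_edges n \<rho> W) {B. valid k Ep f W B}
       = \<rho> ^ card Ep * (\<Prod>v<k. truncated_power (pdeg Ep v) (W (f v)))"
proof (cases "\<forall>v<k. pdeg Ep v \<le> W (f v)")
  case True
  then have "{B. valid k Ep f W B} = {B. \<forall>e\<in>Ep. B (f ` e)}"
    by (simp add: valid_def)
  with True show ?thesis
    using prob_PR_edges_all_present[OF assms] by (simp add: truncated_power_def)
next
  case False
  then obtain v where "v < k" "\<not> pdeg Ep v \<le> W (f v)" by auto
  then have "{B. valid k Ep f W B} = {}" and "(\<Prod>v<k. truncated_power (pdeg Ep v) (W (f v))) = 0"
    by (auto simp: valid_def truncated_power_def intro!: prod_zero)
  then show ?thesis by simp
qed

section \<open>Averaging over the weights\<close>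

lemma nn_integral_Pi_pmf_prod_inj:
  assumes "finite A" "inj_on f K" "f ` K \<subseteq> A"
  shows "(\<integral>\<^sup>+W. (\<Prod>v\<in>K. G v (W (f v))) \<partial>Pi_pmf A dflt p) = (\<Prod>v\<in>K. \<integral>\<^sup>+w. G v w \<partial>p (f v))"
proof -
  let ?inv = "inv_into K f"
  have extend: "(\<Prod>u\<in>A. if u \<in> f ` K then F (?inv u) else 1) = (\<Prod>v\<in>K. F v)"
    for F :: "_ \<Rightarrow> ennreal"
  proof -
    have "(\<Prod>u\<in>A. if u \<in> f ` K then F (?inv u) else 1) = (\<Prod>u\<in>{u \<in> A. u \<in> f ` K}. F (?inv u))"
      using assms(1) by (simp add: prod.inter_filter)
    also have "{u \<in> A. u \<in> f ` K} = f ` K"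
      using assms(3) by blast
    also have "(\<Prod>u\<in>f ` K. F (?inv u)) = (\<Prod>v\<in>K. F v)"
      using assms(2) by (simp add: prod.reindex)
    finally show ?thesis .
  qed
  define H where "H u w = (if u \<in> f ` K then G (?inv u) w else 1)" for u w
  have "(\<Prod>v\<in>K. G v (W (f v))) = (\<Prod>u\<in>A. H u (W u))" for W
    using extend[of "\<lambda>v. G v (W (f v))"] by (simp add: H_def f_inv_into_f cong: if_cong)
  then have "(\<integral>\<^sup>+W. (\<Prod>v\<in>K. G v (W (f v))) \<partial>Pi_pmf A dflt p) = (\<Prod>u\<in>A. \<integral>\<^sup>+w. H u w \<partial>p u)"
    using nn_integral_prod_Pi_pmf[OF assms(1)] by simp
  also have "\<dots> = (\<Prod>u\<in>A. if u \<in> f ` K then \<integral>\<^sup>+w. G (?inv u) w \<partial>p (f (?inv u)) else 1)"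
    by (intro prod.cong) (auto simp: H_def f_inv_into_f emeasure_pmf)
  also have "\<dots> = (\<Prod>v\<in>K. \<integral>\<^sup>+w. G v w \<partial>p (f v))"
    by (rule extend)
  finally show ?thesis .
qed

lemma emeasure_PR_graph_valid:
  assumes Ep: "Ep \<subseteq> doubletons k" and f: "f \<in> assignments k n" and "\<rho> \<ge> 0"
    and bound: "\<forall>w1\<in>set_pmf P. \<forall>w2\<in>set_pmf P. \<rho> * real w1 * real w2 \<le> 1"
  shows "emeasure (PR_graph n P \<rho>) {(W, B). valid k Ep f W B}
       = ennreal (\<rho> ^ card Ep) * (\<Prod>v<k. \<integral>\<^sup>+w. ennreal (truncated_power (pdeg Ep v) w) \<partial>P)"
proof -
  let ?W = "Pi_pmf {0..<n} 0 (\<lambda>_. P)"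
  have "emeasure (PR_graph n P \<rho>) {(W, B). valid k Ep f W B}
      = (\<integral>\<^sup>+W. emeasure (PR_edges n \<rho> W) {B. valid k Ep f W B} \<partial>?W)"
    by (simp add: PR_graph_eq_bind_PR_edges vimage_def)
  also have "\<dots> = (\<integral>\<^sup>+W. ennreal (\<rho> ^ card Ep) * (\<Prod>v<k. ennreal (truncated_power (pdeg Ep v) (W (f v)))) \<partial>?W)"
  proof (rule nn_integral_cong_AE, rule AE_pmfI)
    fix W assume "W \<in> set_pmf ?W"
    then have "\<forall>u<n. W u \<in> set_pmf P"
      by (auto simp: set_Pi_pmf PiE_dflt_def)
    then have "\<forall>u<n. \<forall>v<n. \<rho> * real (W u) * real (W v) \<le> 1"
      using bound by blast
    then show "emeasure (PR_edges n \<rho> W) {B. valid k Ep f W B}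
        = ennreal (\<rho> ^ card Ep) * (\<Prod>v<k. ennreal (truncated_power (pdeg Ep v) (W (f v))))"
      using prob_PR_edges_valid[OF Ep f \<open>\<rho> \<ge> 0\<close>] \<open>\<rho> \<ge> 0\<close>
      by (simp add: measure_pmf.emeasure_eq_measure ennreal_mult prod_ennreal truncated_power_nonneg prod_nonneg)
  qed
  also have "\<dots> = ennreal (\<rho> ^ card Ep) * (\<integral>\<^sup>+W. (\<Prod>v<k. ennreal (truncated_power (pdeg Ep v) (W (f v)))) \<partial>?W)"
    by (rule nn_integral_cmult) simp
  also have "\<dots> = ennreal (\<rho> ^ card Ep) * (\<Prod>v<k. \<integral>\<^sup>+w. ennreal (truncated_power (pdeg Ep v) w) \<partial>P)"
    using f by (subst nn_integral_Pi_pmf_prod_inj) (auto simp: assignments_def atLeast0LessThan)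
  finally show ?thesis .
qed

lemma nn_integral_pmf_nat_eq_suminf:
  fixes P :: "nat pmf"
  assumes "\<And>w. g w \<ge> 0"
  shows "(\<integral>\<^sup>+w. ennreal (g w) \<partial>P) = (\<Sum>w. ennreal (g w * pmf P w))"
  using assms by (simp add: nn_integral_measure_pmf nn_integral_count_space_nat ennreal_mult' mult.commute)

lemma summable_mult_pmf_if_integrable:
  fixes P :: "nat pmf"
  assumes "integrable P g" "\<And>w. g w \<ge> 0"
  shows "summable (\<lambda>w. g w * pmf P w)"
proof (rule summable_suminf_not_top)
  show "(\<Sum>w. ennreal (g w * pmf P w)) \<noteq> \<top>"
    using assms by (simp add: integrable_iff_bounded flip: nn_integral_pmf_nat_eq_suminf)
qed (simp add: assms(2))

lemma finite_set_pmf_if_products_bounded: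
  fixes P :: "nat pmf"
  assumes "\<rho> > 0" "\<forall>w1\<in>set_pmf P. \<forall>w2\<in>set_pmf P. \<rho> * real w1 * real w2 \<le> 1"
  shows "finite (set_pmf P)"
proof (rule finite_subset)
  show "set_pmf P \<subseteq> {..nat \<lceil>1 / \<rho>\<rceil>}"
  proof
    fix w assume w: "w \<in> set_pmf P"
    have "\<rho> * real w \<le> 1"
    proof (cases "w = 0")
      case False
      then have "\<rho> * real w * 1 \<le> \<rho> * real w * real w"
        using assms(1) by (intro mult_left_mono) auto
      with w assms(2) show ?thesis by fastforce
    qed simp
    then have "real w \<le> 1 / \<rho>"
      using assms(1) by (simp add: field_simps)
    then show "w \<in> {..nat \<lceil>1 / \<rho>\<rceil>}"
      by (simp add: le_nat_iff le_ceiling_iff)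
  qed
qed simp

text \<open>This is what makes the real series in \<open>\<epsilon>\<close> converge, unless \<open>\<epsilon>\<close> vanishes anyway: for
  \<open>\<rho> > 0\<close> the bound confines the weights to a finite set, and for \<open>\<rho> = 0\<close> the pattern has no
  edges.\<close>

lemma integrable_truncated_power:
  assumes Ep: "Ep \<subseteq> doubletons k" and "\<rho> \<ge> 0"
    and bound: "\<forall>w1\<in>set_pmf P. \<forall>w2\<in>set_pmf P. \<rho> * real w1 * real w2 \<le> 1"
    and "\<rho> ^ card Ep \<noteq> 0"
  shows "integrable P (truncated_power (pdeg Ep v))"
proof (cases "\<rho> > 0")
  case True
  then show ?thesis
    using finite_set_pmf_if_products_bounded[OF _ bound] integrable_measure_pmf_finite by blast
next
  case False
  with assms(2,4) have "Ep = {}"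
    using finite_subset[OF Ep finite_doubletons] by (cases "card Ep") auto
  then have "truncated_power (pdeg Ep v) = (\<lambda>_. 1)"
    by (simp add: pdeg_def truncated_power_def fun_eq_iff)
  then show ?thesis by simp
qed

lemma prob_PR_graph_valid:
  assumes "simple_graph k Ep" "f \<in> assignments k n" "\<rho> \<ge> 0"
    and bound: "\<forall>w1\<in>set_pmf P. \<forall>w2\<in>set_pmf P. \<rho> * real w1 * real w2 \<le> 1"
  shows "measure_pmf.prob (PR_graph n P \<rho>) {(W, B). valid k Ep f W B}
       = \<rho> ^ card Ep * (\<Prod>v<k. \<Sum>w. (if pdeg Ep v \<le> w then real w ^ pdeg Ep v * pmf P w else 0))"
proof -
  let ?\<mu> = "\<lambda>v. \<Sum>w. truncated_power (pdeg Ep v) w * pmf P w"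
  have Ep: "Ep \<subseteq> doubletons k" using assms(1) by (simp add: simple_graph_def)
  note emeasure_valid = emeasure_PR_graph_valid[OF Ep assms(2-4)]
  have "measure_pmf.prob (PR_graph n P \<rho>) {(W, B). valid k Ep f W B} = \<rho> ^ card Ep * (\<Prod>v<k. ?\<mu> v)"
  proof (cases "\<rho> ^ card Ep = 0")
    case True
    then show ?thesis
      using emeasure_valid by (simp add: measure_pmf.emeasure_eq_measure power_0_left)
  next
    case False
    then have "integrable P (truncated_power (pdeg Ep v))" for v
      using integrable_truncated_power[OF Ep \<open>\<rho> \<ge> 0\<close> bound] by blast
    then have "summable (\<lambda>w. truncated_power (pdeg Ep v) w * pmf P w)" for v
      by (simp add: summable_mult_pmf_if_integrable truncated_power_nonneg)
    then have "(\<integral>\<^sup>+w. ennreal (truncated_power (pdeg Ep v) w) \<partial>P) = ennreal (?\<mu> v)"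
      and \<mu>_nonneg: "?\<mu> v \<ge> 0" for v
      by (simp_all add: nn_integral_pmf_nat_eq_suminf suminf_ennreal2 suminf_nonneg truncated_power_nonneg)
    then have "emeasure (PR_graph n P \<rho>) {(W, B). valid k Ep f W B}
        = ennreal (\<rho> ^ card Ep) * ennreal (\<Prod>v<k. ?\<mu> v)"
      using emeasure_valid by (simp add: prod_ennreal)
    also have "\<dots> = ennreal (\<rho> ^ card Ep * (\<Prod>v<k. ?\<mu> v))"
      using \<open>\<rho> \<ge> 0\<close> \<mu>_nonneg by (simp add: ennreal_mult prod_nonneg)
    finally show ?thesis
      using \<open>\<rho> \<ge> 0\<close> \<mu>_nonneg by (simp add: measure_pmf.emeasure_eq_measure prod_nonneg)
  qed
  moreover have "?\<mu> v = (\<Sum>w. (if pdeg Ep v \<le> w then real w ^ pdeg Ep v * pmf P w else 0))" for v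
    by (intro suminf_cong) (simp add: truncated_power_def)
  ultimately show ?thesis by simp
qed

section \<open>Expected number of matches\<close>

lemma prob_pair_pmf_constant_sections:
  assumes "\<And>x. x \<in> set_pmf p \<Longrightarrow> measure_pmf.prob q {y. R x y} = c"
  shows "measure_pmf.prob (pair_pmf p q) {(x, y). R x y} = c"
proof -
  obtain x where "x \<in> set_pmf p" using set_pmf_not_empty[of p] by blast
  then have "c \<ge> 0" using assms by force
  have "emeasure (pair_pmf p q) {(x, y). R x y} = (\<integral>\<^sup>+x. emeasure q {y. R x y} \<partial>p)"
    by (simp add: pair_pmf_def map_pmf_def[symmetric] vimage_def)
  also have "\<dots> = (\<integral>\<^sup>+x. ennreal c \<partial>p)"
    using assms by (intro nn_integral_cong_AE AE_pmfI) (simp add: measure_pmf.emeasure_eq_measure)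
  also have "\<dots> = ennreal c"
    by (simp add: measure_pmf.emeasure_space_1)
  finally show ?thesis
    using \<open>c \<ge> 0\<close> by (simp add: measure_pmf.emeasure_eq_measure)
qed

lemma expectation_card_filter:
  assumes "finite S"
  shows "measure_pmf.expectation G (\<lambda>x. real (card {f \<in> S. R f x}))
       = (\<Sum>f\<in>S. measure_pmf.prob G {x. R f x})"
proof -
  have "real (card {f \<in> S. R f x}) = (\<Sum>f\<in>S. indicator {x. R f x} x)" for x
    using assms by (simp add: indicator_def sum.If_cases Int_def)
  then show ?thesis
    by (simp add: Bochner_Integration.integral_sum measure_pmf.integrable_const_bound[where B = 1])
qed

theorem mainTheorem5:
  fixes k n :: nat and Ep :: "nat set set" and ord :: "(nat \<times> nat) set"
    and P :: "nat pmf" and \<rho> :: real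
  assumes "simple_graph k Ep"
    and "symmetry_breaking k Ep ord"
    and "k \<le> n"
    and "\<rho> \<ge> 0"
    and "\<forall>w1\<in>set_pmf P. \<forall>w2\<in>set_pmf P. \<rho> * real w1 * real w2 \<le> 1"
  defines "\<epsilon> \<equiv> \<rho> ^ card Ep *
      (\<Prod>v<k. \<Sum>w. (if pdeg Ep v \<le> w then real w ^ pdeg Ep v * pmf P w else 0))"
  shows "measure_pmf.prob (pair_pmf (pmf_of_set (assignments k n)) (PR_graph n P \<rho>))
           {(f, W, B). valid k Ep f W B} = \<epsilon>
    \<and> measure_pmf.expectation (PR_graph n P \<rho>)
           (\<lambda>(W, B). real (card (matches k n Ep ord W B)))
         = fact n / fact (n - k) * \<epsilon> * real (card (Auto_ord k Ep ord)) / real (card (Auto k Ep))"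
proof
  let ?A = "assignments k n" and ?S = "{f \<in> assignments k n. sat_ord ord f}"
  have prob_valid: "measure_pmf.prob (PR_graph n P \<rho>) {(W, B). valid k Ep f W B} = \<epsilon>" if "f \<in> ?A" for f
    unfolding \<epsilon>_def using prob_PR_graph_valid assms(1,4,5) that by blast
  have "restrict id {0..<k} \<in> ?A"
    using assms(3) by (auto simp: assignments_def)
  then have support: "set_pmf (pmf_of_set ?A) = ?A"
    using finite_assignments by (intro set_pmf_of_set) auto
  show "measure_pmf.prob (pair_pmf (pmf_of_set ?A) (PR_graph n P \<rho>)) {(f, W, B). valid k Ep f W B} = \<epsilon>"
    by (rule prob_pair_pmf_constant_sections[where R = "\<lambda>f (W, B). valid k Ep f W B"])
       (use prob_valid support in auto)
  have "matches k n Ep ord W B = {f \<in> ?S. valid k Ep f W B}" for W B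
    by (auto simp: matches_def)
  then have "measure_pmf.expectation (PR_graph n P \<rho>) (\<lambda>(W, B). real (card (matches k n Ep ord W B)))
      = (\<Sum>f\<in>?S. measure_pmf.prob (PR_graph n P \<rho>) {(W, B). valid k Ep f W B})"
    using expectation_card_filter[where S = ?S and R = "\<lambda>f (W, B). valid k Ep f W B"] finite_assignments
    by (simp add: case_prod_unfold)
  also have "\<dots> = real (card ?S) * \<epsilon>"
    using prob_valid by simp
  also have "real (card ?S) = real (card ?A) * real (card (Auto_ord k Ep ord)) / real (card (Auto k Ep))"
    using card_sat_ord_mult_card_Auto[OF assms(2), of n] finite_Auto Auto_nonempty
    by (simp add: field_simps flip: of_nat_mult)
  finally show "measure_pmf.expectation (PR_graph n P \<rho>) (\<lambda>(W, B). real (card (matches k n Ep ord W B)))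
      = fact n / fact (n - k) * \<epsilon> * real (card (Auto_ord k Ep ord)) / real (card (Auto k Ep))"
    using card_assignments[OF assms(3)] by simp
qed

end
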